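(* Let $k$ be an odd positive integer, let $A,B$ be finite subsets of an abelian group, and let $C\subseteq A+B$. Let $\Gamma_C$ be the bipartite graph with vertex classes $A$ and $B$ (taken as disjoint copies) in which $a\in A$ and $b\in B$ are adjacent if and only if $a+b\in C$. Suppose that for every pair $(a,b)\in A\times B$ there are at least $w>0$ walks of length $k$ in $\Gamma_C$ from $a$ to $b$. Then $|A+B|\le |C|^k/w$.
   Context: For subsets $X,Y$ of an abelian group, $X+Y=\{x+y:x\in X,y\in Y\}$. A walk of length $k$ is a sequence of $k+1$ vertices with consecutive vertices adjacent. *)

theory Defs
  imports Complex_Main "HOL-Library.Set_Algebras"
begin

text \<open>The bipartite graph Gamma_C: vertex classes are disjoint copies of A (tagged Inl)
  and B (tagged Inr); Inl a and Inr b are adjacent iff a \<in> A, b \<in> B and a + b \<in> C.\<close>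
definition bip_adj :: "'g::ab_group_add set \<Rightarrow> 'g set \<Rightarrow> 'g set \<Rightarrow> 'g + 'g \<Rightarrow> 'g + 'g \<Rightarrow> bool" where
  "bip_adj A B C u v =
     (case (u, v) of
        (Inl a, Inr b) \<Rightarrow> a \<in> A \<and> b \<in> B \<and> a + b \<in> C
      | (Inr b, Inl a) \<Rightarrow> a \<in> A \<and> b \<in> B \<and> a + b \<in> C
      | _ \<Rightarrow> False)"

definition walks :: "'g::ab_group_add set \<Rightarrow> 'g set \<Rightarrow> 'g set \<Rightarrow> nat \<Rightarrow> 'g + 'g \<Rightarrow> 'g + 'g \<Rightarrow> ('g + 'g) list set" where
  "walks A B C k u v =
     {xs. length xs = Suc k \<and> xs ! 0 = u \<and> xs ! k = v \<and>
          (\<forall>i<k. bip_adj A B C (xs ! i) (xs ! Suc i))}"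

end

theory Submission
  imports Defs
begin

text \<open>A walk of odd length k from a to b is recorded by its k edge sums, all lying in C.
  The alternating sum of these edge sums telescopes to a + b, and since all neighbours of
  a vertex lie on the opposite side, the edge sums together with the starting vertex
  determine the walk. Choosing one representation a + b for each element of A + B thus
  yields an injection of at least |A + B| w walks into the |C|^k words of length k over C.\<close>

fun vertex_elem :: "'g + 'g \<Rightarrow> 'g" where
  "vertex_elem (Inl a) = a"
| "vertex_elem (Inr b) = b"

definition edge_sums :: "nat \<Rightarrow> ('g::ab_group_add + 'g) list \<Rightarrow> 'g list" where
  "edge_sums k xs = map (\<lambda>i. vertex_elem (xs ! i) + vertex_elem (xs ! Suc i)) [0..<k]"

definition alternating_sum :: "'g::ab_group_add list \<Rightarrow> 'g" where
  "alternating_sum cs = (\<Sum>i<length cs. if even i then cs ! i else - cs ! i)"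

lemma alternating_sum_telescope:
  fixes v :: "nat \<Rightarrow> 'g::ab_group_add"
  shows "(\<Sum>i<n. if even i then v i + v (Suc i) else - (v i + v (Suc i)))
         = v 0 + (if even n then - v n else v n)"
  by (induction n) (auto simp: algebra_simps)

lemma alternating_sum_edge_sums_odd:
  assumes "odd k"
  shows "alternating_sum (edge_sums k xs) = vertex_elem (xs ! 0) + vertex_elem (xs ! k)"
proof -
  have "alternating_sum (edge_sums k xs)
      = (\<Sum>i<k. if even i then vertex_elem (xs ! i) + vertex_elem (xs ! Suc i)
                else - (vertex_elem (xs ! i) + vertex_elem (xs ! Suc i)))"
    unfolding alternating_sum_def edge_sums_def by (intro sum.cong) auto
  then show ?thesis
    using alternating_sum_telescope[of "\<lambda>i. vertex_elem (xs ! i)" k] assms by simp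
qed

lemma bip_adj_sum_mem:
  assumes "bip_adj A B C u v"
  shows "vertex_elem u + vertex_elem v \<in> C"
  using assms by (cases u; cases v) (auto simp: bip_adj_def add.commute)

lemma bip_adj_neighbour_unique:
  assumes "bip_adj A B C u p" "bip_adj A B C u q" "vertex_elem p = vertex_elem q"
  shows "p = q"
  using assms by (cases u; cases p; cases q) (auto simp: bip_adj_def)

lemma edge_sums_walk:
  assumes "xs \<in> walks A B C k u v"
  shows "length (edge_sums k xs) = k" "set (edge_sums k xs) \<subseteq> C"
  using assms by (auto simp: edge_sums_def walks_def intro!: bip_adj_sum_mem)

lemma walks_eq_if_edge_sums_eq:
  assumes xs: "xs \<in> walks A B C k u v" and ys: "ys \<in> walks A B C k u v'"
    and sums: "edge_sums k xs = edge_sums k ys"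
  shows "xs = ys"
proof -
  have "xs ! i = ys ! i" if "i \<le> k" for i
    using that
  proof (induction i)
    case 0
    then show ?case using xs ys by (simp add: walks_def)
  next
    case (Suc i)
    then have ik: "i < k" and same: "xs ! i = ys ! i" by simp_all
    have "edge_sums k xs ! i = edge_sums k ys ! i" using sums by simp
    then have "vertex_elem (xs ! Suc i) = vertex_elem (ys ! Suc i)"
      using ik same by (simp add: edge_sums_def)
    moreover have "bip_adj A B C (xs ! i) (xs ! Suc i)" "bip_adj A B C (xs ! i) (ys ! Suc i)"
      using xs ys ik same by (auto simp: walks_def)
    ultimately show ?case using bip_adj_neighbour_unique by blast
  qed
  moreover have "length xs = Suc k" "length ys = Suc k" using xs ys by (auto simp: walks_def)
  ultimately show ?thesis by (intro nth_equalityI) auto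
qed

lemma sum_card_walks_le:
  fixes S :: "'g::ab_group_add set"
  assumes "odd k" "finite S" "finite C" and rep: "\<And>x. x \<in> S \<Longrightarrow> a x + b x = x"
  shows "(\<Sum>x\<in>S. card (walks A B C k (Inl (a x)) (Inr (b x)))) \<le> card C ^ k"
proof -
  define W where "W x = walks A B C k (Inl (a x)) (Inr (b x))" for x
  define T where "T = Sigma S W"
  define f where "f = (\<lambda>(x::'g, xs::('g + 'g) list). edge_sums k xs)"
  define words where "words = {cs. set cs \<subseteq> C \<and> length cs = k}"
  have start: "alternating_sum (f (x, xs)) = x" if "(x, xs) \<in> T" for x xs
    using that rep alternating_sum_edge_sums_odd[OF \<open>odd k\<close>, of xs]
    by (auto simp: T_def W_def walks_def f_def)
  have inj: "inj_on f T"
  proof (rule inj_onI, clarify)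
    fix x xs y ys assume p: "(x, xs) \<in> T" and q: "(y, ys) \<in> T" and eq: "f (x, xs) = f (y, ys)"
    then have "x = y" using start by metis
    with p q eq show "x = y \<and> xs = ys"
      using walks_eq_if_edge_sums_eq by (auto simp: T_def W_def f_def)
  qed
  have img: "f ` T \<subseteq> words"
    unfolding T_def W_def f_def words_def using edge_sums_walk by fastforce
  have finite_words: "finite words" and card_words: "card words = card C ^ k"
    using \<open>finite C\<close> by (simp_all add: words_def finite_lists_length_eq card_lists_length_eq)
  have "finite T"
    using finite_imageD[OF finite_subset[OF img finite_words] inj] .
  have "card T \<le> card C ^ k"
    using card_image[OF inj] card_mono[OF finite_words img] card_words by simp
  moreover have "finite (W x)" if "x \<in> S" for x
  proof -
    have "finite (Pair x -` T)" by (rule finite_vimageI[OF \<open>finite T\<close>]) (simp add: inj_on_def)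
    then show ?thesis by (rule finite_subset[rotated]) (use that in \<open>auto simp: T_def\<close>)
  qed
  ultimately show ?thesis
    using \<open>finite S\<close> by (simp add: T_def W_def)
qed

theorem lemma2p1:
  fixes A B C :: "'g::ab_group_add set" and k :: nat and w :: real
  assumes "odd k"
    and "finite A" and "finite B"
    and "C \<subseteq> A + B"
    and "w > 0"
    and "\<forall>a\<in>A. \<forall>b\<in>B. real (card (walks A B C k (Inl a) (Inr b))) \<ge> w"
  shows "real (card (A + B)) \<le> real (card C) ^ k / w"
proof -
  have fin: "finite (A + B)" "finite C"
    using assms(2-4) finite_set_plus finite_subset by blast+
  obtain a b where rep: "\<forall>x\<in>A + B. a x \<in> A \<and> b x \<in> B \<and> a x + b x = x"
    using bchoice[of "A + B" "\<lambda>x p. fst p \<in> A \<and> snd p \<in> B \<and> fst p + snd p = x"]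
    by (metis set_plus_elim)
  have "real (card (A + B)) * w = (\<Sum>x\<in>A + B. w)" by simp
  also have "\<dots> \<le> (\<Sum>x\<in>A + B. real (card (walks A B C k (Inl (a x)) (Inr (b x)))))"
    using assms(6) rep by (intro sum_mono) auto
  also have "\<dots> \<le> real (card C ^ k)"
    unfolding of_nat_sum[symmetric] of_nat_le_iff
    using sum_card_walks_le[OF \<open>odd k\<close> fin, of a b A B] rep by simp
  finally show ?thesis using \<open>w > 0\<close> by (simp add: field_simps)
qed

end
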